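(* Let $C$ be a square in the plane. For a point $p\in C$, let $D_p$ be the set of points of the plane that are closer to $p$ than to any point of the boundary $\partial C$, and let $f(p)=\operatorname{area}(D_p)/\operatorname{area}(C)$. If $p$ is a point chosen uniformly at random from $C$, then $\Pr[f(p)\ge 1/15]\ge 1/15$.
   Context: Distances are Euclidean. *)

theory Defs
  imports "HOL-Analysis.Analysis"
begin

definition is_square :: "(real^2) set \<Rightarrow> bool" where
  "is_square C \<longleftrightarrow> (\<exists>a u v. u \<noteq> 0 \<and> norm u = norm v \<and> inner u v = 0 \<and>
      C = {a + s *\<^sub>R u + t *\<^sub>R v | s t. 0 \<le> s \<and> s \<le> 1 \<and> 0 \<le> t \<and> t \<le> 1})"

definition closer_region :: "(real^2) set \<Rightarrow> real^2 \<Rightarrow> (real^2) set" where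
  "closer_region C p = {x. \<forall>q \<in> frontier C. dist x p < dist x q}"

definition area_ratio :: "(real^2) set \<Rightarrow> real^2 \<Rightarrow> real" where
  "area_ratio C p = measure lebesgue (closer_region C p) / measure lebesgue C"

end

theory Submission
  imports Defs
begin

text \<open>If the ball of radius 2r about p lies in C, every boundary point is at distance at least 2r
from p, so the ball of radius r about p lies in D_p. In a square of side L, every point of the
concentric subsquare of side 2L/5 is at distance at least 3L/10 from the boundary, so for these
points area(D_p) \<ge> \<pi> (3L/20)^2 > L^2/15, and the subsquare has probability 4/25 > 1/15.\<close>

lemma closer_region_subset:
  assumes "p \<in> C"
  shows "closer_region C p \<subseteq> C"
proof
  fix x assume x: "x \<in> closer_region C p"
  show "x \<in> C"
  proof (rule ccontr)
    assume "x \<notin> C"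
    then obtain q where q: "q \<in> closed_segment p x" "q \<in> frontier C"
      using assms connected_Int_frontier[of "closed_segment p x" C] by blast
    then have "dist x q \<le> dist x p"
      using dist_in_closed_segment[OF q(1)] by (simp add: dist_commute)
    with x q(2) show False by (force simp: closer_region_def)
  qed
qed

lemma ball_subset_closer_region:
  assumes "ball p (2 * r) \<subseteq> C"
  shows "ball p r \<subseteq> closer_region C p"
proof
  fix x assume x: "x \<in> ball p r"
  have "dist x p < dist x q" if "q \<in> frontier C" for q
  proof -
    have "ball p (2 * r) \<subseteq> interior C" using assms by (simp add: interior_maximal)
    then have "2 * r \<le> dist p q" using that by (force simp: frontier_def)
    with x dist_triangle[of p q x] show ?thesis by (simp add: dist_commute)
  qed
  then show "x \<in> closer_region C p" by (simp add: closer_region_def)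
qed

lemma closer_region_eq_infdist:
  assumes "frontier C \<noteq> {}"
  shows "closer_region C p = {x. dist x p < infdist x (frontier C)}"
proof (intro set_eqI iffI)
  fix x assume "x \<in> closer_region C p"
  moreover obtain q where "q \<in> frontier C" "infdist x (frontier C) = dist x q"
    using infdist_attains_inf[OF frontier_closed assms] by blast
  ultimately show "x \<in> {x. dist x p < infdist x (frontier C)}" by (simp add: closer_region_def)
next
  fix x assume "x \<in> {x. dist x p < infdist x (frontier C)}"
  then show "x \<in> closer_region C p"
    using infdist_le[of _ "frontier C" x] by (force simp: closer_region_def)
qed

lemma open_closer_region_graph: "open {(p, x). x \<in> closer_region C p}"
proof (cases "frontier C = {}")
  case True
  then show ?thesis by (simp add: closer_region_def)
next
  case False
  then have "{(p, x). x \<in> closer_region C p} = {z. dist (snd z) (fst z) < infdist (snd z) (frontier C)}"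
    by (auto simp: closer_region_eq_infdist)
  then show ?thesis by (auto intro!: open_Collect_less continuous_intros)
qed

lemma open_closer_region: "open (closer_region C p)"
proof -
  have "closer_region C p = Pair p -` {(p, x). x \<in> closer_region C p}" by auto
  also have "open \<dots>"
    by (intro continuous_open_vimage open_closer_region_graph continuous_intros)
  finally show ?thesis .
qed

lemma borel_measurable_measure_closer_region:
  "(\<lambda>p. measure lebesgue (closer_region C p)) \<in> borel_measurable lebesgue"
proof -
  define G where "G = {(p, x). x \<in> closer_region C p}"
  have "G \<in> sets (lborel \<Otimes>\<^sub>M lborel)"
    unfolding lborel_prod G_def using open_closer_region_graph by simp
  then have emeasure_section: "(\<lambda>p. emeasure lborel (Pair p -` G)) \<in> borel_measurable lborel"
    by (rule lborel.measurable_emeasure_Pair)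
  have measure_section: "measure lebesgue (closer_region C p) = enn2real (emeasure lborel (Pair p -` G))" for p
  proof -
    have "Pair p -` G = closer_region C p" by (auto simp: G_def)
    then show ?thesis using open_closer_region[of C p] by (simp add: measure_completion measure_def)
  qed
  show ?thesis
    unfolding measure_section by (intro measurable_completion) (use emeasure_section in measurable)
qed

lemma area_ratio_ge_ball:
  assumes "bounded C" "ball p (2 * r) \<subseteq> C" "0 < r"
  shows "pi * r^2 / measure lebesgue C \<le> area_ratio C p"
proof -
  have "p \<in> C" using assms(2,3) by auto
  then have "bounded (closer_region C p)"
    using bounded_subset[OF assms(1) closer_region_subset] by blast
  then have "closer_region C p \<in> lmeasurable"
    using open_closer_region by (rule lmeasurable_open)
  then have "measure lebesgue (ball p r) \<le> measure lebesgue (closer_region C p)"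
    using ball_subset_closer_region[OF assms(2)] by (intro measure_mono_fmeasurable) auto
  moreover have "measure lebesgue (ball p r) = pi * r^2"
    using circle_area[of r p] assms(3) by (simp add: measure_completion)
  ultimately show ?thesis
    unfolding area_ratio_def by (intro divide_right_mono) simp_all
qed

lemma sets_lebesgue_area_ratio_ge:
  assumes "C \<in> sets lebesgue"
  shows "{p \<in> C. c \<le> area_ratio C p} \<in> sets lebesgue"
proof -
  have "(\<lambda>p. area_ratio C p) \<in> borel_measurable lebesgue"
    unfolding area_ratio_def using borel_measurable_measure_closer_region by measurable
  then have "{p \<in> space lebesgue. c \<le> area_ratio C p} \<in> sets lebesgue" by measurable
  moreover have "{p \<in> C. c \<le> area_ratio C p} = C \<inter> {p \<in> space lebesgue. c \<le> area_ratio C p}"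
    by auto
  ultimately show ?thesis using assms by auto
qed

definition square_map :: "real^2 \<Rightarrow> real^2 \<Rightarrow> real^2 \<Rightarrow> real^2 \<Rightarrow> real^2" where
  "square_map a u v w = a + w$1 *\<^sub>R u + w$2 *\<^sub>R v"

lemma square_map_image_cbox:
  "square_map a u v ` cbox (vec lo) (vec hi) =
     {a + s *\<^sub>R u + t *\<^sub>R v | s t. lo \<le> s \<and> s \<le> hi \<and> lo \<le> t \<and> t \<le> hi}"
proof (intro set_eqI iffI)
  fix x assume "x \<in> {a + s *\<^sub>R u + t *\<^sub>R v | s t. lo \<le> s \<and> s \<le> hi \<and> lo \<le> t \<and> t \<le> hi}"
  then obtain s t where "x = a + s *\<^sub>R u + t *\<^sub>R v" "lo \<le> s" "s \<le> hi" "lo \<le> t" "t \<le> hi"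
    by blast
  then show "x \<in> square_map a u v ` cbox (vec lo) (vec hi)"
    by (intro image_eqI[of _ _ "vector [s, t]"]) (auto simp: square_map_def mem_box_cart forall_2)
next
  fix x assume "x \<in> square_map a u v ` cbox (vec lo) (vec hi)"
  then obtain w where "x = square_map a u v w" "lo \<le> w$1" "w$1 \<le> hi" "lo \<le> w$2" "w$2 \<le> hi"
    by (auto simp: mem_box_cart forall_2)
  then show "x \<in> {a + s *\<^sub>R u + t *\<^sub>R v | s t. lo \<le> s \<and> s \<le> hi \<and> lo \<le> t \<and> t \<le> hi}"
    unfolding square_map_def by blast
qed

lemma is_squareE:
  assumes "is_square C"
  obtains a u v where "u \<noteq> 0" "norm u = norm v" "inner u v = 0"
    "C = square_map a u v ` cbox (vec 0) (vec 1)"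
  using assms unfolding is_square_def square_map_image_cbox by blast

lemma linear_square_map: "linear (square_map 0 u v)"
  by (intro linearI) (auto simp: square_map_def algebra_simps)

lemma compact_square_map_cbox: "compact (square_map a u v ` cbox (vec lo) (vec hi))"
  unfolding square_map_def by (intro compact_continuous_image continuous_intros) auto

lemma measure_square_map_cbox:
  assumes "lo \<le> hi"
  shows "measure lebesgue (square_map a u v ` cbox (vec lo) (vec hi)) =
           \<bar>u$1 * v$2 - u$2 * v$1\<bar> * (hi - lo)^2"
proof -
  have "square_map a u v ` cbox (vec lo) (vec hi) = (+) a ` square_map 0 u v ` cbox (vec lo) (vec hi)"
    by (simp add: image_image square_map_def add.assoc)
  then have "measure lebesgue (square_map a u v ` cbox (vec lo) (vec hi)) =
               measure lebesgue (square_map 0 u v ` cbox (vec lo) (vec hi))"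
    by (simp add: measure_translation)
  also have "\<dots> = \<bar>det (matrix (square_map 0 u v))\<bar> * measure lebesgue (cbox (vec lo) (vec hi :: real^2))"
    by (rule measure_lebesgue_linear_transformation) (auto simp: linear_square_map)
  also have "det (matrix (square_map 0 u v)) = u$1 * v$2 - u$2 * v$1"
    by (simp add: det_2 matrix_def square_map_def axis_def)
  also have "measure lebesgue (cbox (vec lo) (vec hi :: real^2)) = (hi - lo)^2"
    using assms by (simp add: measure_completion content_cbox_cart mem_box_cart prod_2 power2_eq_square)
  finally show ?thesis .
qed

lemma abs_det2_orthogonal:
  fixes u v :: "real^2"
  assumes "inner u v = 0"
  shows "\<bar>u$1 * v$2 - u$2 * v$1\<bar> = norm u * norm v"
proof -
  have "(u$1 * v$2 - u$2 * v$1)^2 + (inner u v)^2 = (norm u)^2 * (norm v)^2"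
    unfolding power2_norm_eq_inner by (simp add: inner_vec_def sum_2 algebra_simps power2_eq_square)
  then have "sqrt ((u$1 * v$2 - u$2 * v$1)^2) = sqrt ((norm u * norm v)^2)"
    using assms by (simp add: power_mult_distrib)
  then show ?thesis by simp
qed

lemma inner_square_map_diff:
  assumes "inner u v = 0"
  shows "inner (square_map a u v w' - square_map a u v w) u = (w'$1 - w$1) * (norm u)^2"
    and "inner (square_map a u v w' - square_map a u v w) v = (w'$2 - w$2) * (norm v)^2"
  using assms
  by (simp_all add: square_map_def inner_diff_left inner_add_left inner_commute[of v u]
      power2_norm_eq_inner algebra_simps)

lemma surj_square_map:
  assumes "u \<noteq> 0" "v \<noteq> 0" "inner u v = 0"
  shows "surj (square_map a u v)"
proof -
  have "inj (square_map 0 u v)"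
  proof (rule injI)
    fix w w' assume "square_map 0 u v w' = square_map 0 u v w"
    then have "w'$1 = w$1" "w'$2 = w$2"
      using inner_square_map_diff[OF assms(3), of 0 w' w] assms(1,2) by auto
    then show "w' = w" by (simp add: vec_eq_iff forall_2)
  qed
  then have "surj (square_map 0 u v)"
    by (simp add: linear_injective_imp_surjective linear_square_map)
  show ?thesis unfolding surj_def
  proof
    fix y
    obtain w where "y - a = square_map 0 u v w"
      using surjD[OF \<open>surj (square_map 0 u v)\<close>] by blast
    then show "\<exists>w. y = square_map a u v w" by (auto simp: square_map_def algebra_simps)
  qed
qed

lemma square_map_coords_close:
  assumes "u \<noteq> 0" "norm u = norm v" "inner u v = 0"
    and "dist (square_map a u v w') (square_map a u v w) < \<delta> * norm u"
  shows "\<bar>w'$1 - w$1\<bar> < \<delta>" and "\<bar>w'$2 - w$2\<bar> < \<delta>"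
proof -
  let ?d = "square_map a u v w' - square_map a u v w"
  have "norm ?d < \<delta> * norm u" using assms(4) by (simp add: dist_norm)
  have "\<bar>w'$1 - w$1\<bar> * (norm u)^2 = \<bar>inner ?d u\<bar>"
    by (simp add: inner_square_map_diff(1)[OF assms(3)] abs_mult)
  also have "\<dots> \<le> norm ?d * norm u" by (rule Cauchy_Schwarz_ineq2)
  also have "\<dots> < \<delta> * (norm u)^2"
    using \<open>norm ?d < \<delta> * norm u\<close> assms(1) by (simp add: power2_eq_square)
  finally show "\<bar>w'$1 - w$1\<bar> < \<delta>" using assms(1) by simp
  have "\<bar>w'$2 - w$2\<bar> * (norm u)^2 = \<bar>inner ?d v\<bar>"
    by (simp add: inner_square_map_diff(2)[OF assms(3)] abs_mult assms(2))
  also have "\<dots> \<le> norm ?d * norm u" using Cauchy_Schwarz_ineq2[of ?d v] assms(2) by simp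
  also have "\<dots> < \<delta> * (norm u)^2"
    using \<open>norm ?d < \<delta> * norm u\<close> assms(1) by (simp add: power2_eq_square)
  finally show "\<bar>w'$2 - w$2\<bar> < \<delta>" using assms(1) by simp
qed

lemma ball_subset_square_map_cbox:
  assumes "u \<noteq> 0" "norm u = norm v" "inner u v = 0"
    and "w \<in> cbox (vec (lo + \<delta>)) (vec (hi - \<delta>))"
  shows "ball (square_map a u v w) (\<delta> * norm u) \<subseteq> square_map a u v ` cbox (vec lo) (vec hi)"
proof
  fix x assume x: "x \<in> ball (square_map a u v w) (\<delta> * norm u)"
  have "v \<noteq> 0" using assms(1,2) by auto
  then obtain w' where x_eq: "x = square_map a u v w'"
    using surj_square_map[OF assms(1) _ assms(3)] by (metis surjD)
  have "\<bar>w'$1 - w$1\<bar> < \<delta>" "\<bar>w'$2 - w$2\<bar> < \<delta>"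
    using square_map_coords_close[OF assms(1-3)] x by (simp_all add: x_eq dist_commute)
  with assms(4) have "w' \<in> cbox (vec lo) (vec hi)" by (auto simp: mem_box_cart forall_2)
  then show "x \<in> square_map a u v ` cbox (vec lo) (vec hi)" by (simp add: x_eq)
qed

lemma is_square_inner_subsquare:
  assumes "is_square C" "0 \<le> \<delta>" "\<delta> \<le> 1/2"
  obtains L Q where "L > 0" "measure lebesgue C = L^2" "Q \<subseteq> C" "Q \<in> lmeasurable"
    "measure lebesgue Q = ((1 - 2 * \<delta>) * L)^2" "\<And>p. p \<in> Q \<Longrightarrow> ball p (\<delta> * L) \<subseteq> C"
proof -
  obtain a u v where u: "u \<noteq> 0" "norm u = norm v" "inner u v = 0"
    and C: "C = square_map a u v ` cbox (vec 0) (vec 1)"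
    using assms(1) by (rule is_squareE)
  define Q where "Q = square_map a u v ` cbox (vec \<delta>) (vec (1 - \<delta>))"
  have det: "\<bar>u$1 * v$2 - u$2 * v$1\<bar> = (norm u)^2"
    using abs_det2_orthogonal[OF u(3)] u(2) by (simp add: power2_eq_square)
  show ?thesis
  proof
    show "norm u > 0" "Q \<in> lmeasurable"
      using u(1) by (simp_all add: Q_def lmeasurable_compact compact_square_map_cbox)
    show "measure lebesgue C = (norm u)^2" "measure lebesgue Q = ((1 - 2 * \<delta>) * norm u)^2"
      using assms(2,3) measure_square_map_cbox[of 0 1 a u v] measure_square_map_cbox[of \<delta> "1 - \<delta>" a u v]
      by (simp_all add: C Q_def det power_mult_distrib)
    show "Q \<subseteq> C" unfolding C Q_def using assms(2,3)
      by (intro image_mono subset_interval_imp_cart(1)) simp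
    show "ball p (\<delta> * norm u) \<subseteq> C" if p: "p \<in> Q" for p
    proof -
      obtain w where "w \<in> cbox (vec (0 + \<delta>)) (vec (1 - \<delta>))" "p = square_map a u v w"
        using p by (auto simp: Q_def)
      then show ?thesis unfolding C by (metis ball_subset_square_map_cbox[OF u])
    qed
  qed
qed

lemma compact_square:
  assumes "is_square C"
  shows "compact C"
proof -
  obtain a u v where "C = square_map a u v ` cbox (vec 0) (vec 1)"
    using assms by (rule is_squareE)
  then show ?thesis using compact_square_map_cbox[of a u v 0 1] by simp
qed

lemma measure_uniform_measure_ge_subset:
  assumes "A \<in> fmeasurable M" "measure M A \<noteq> 0" "B \<in> sets M" "Q \<in> sets M" "Q \<subseteq> A \<inter> B"
  shows "measure M Q / measure M A \<le> measure (uniform_measure M A) B"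
proof -
  have "measure M Q \<le> measure M (A \<inter> B)"
    using assms by (intro measure_mono_fmeasurable fmeasurable_Int_fmeasurable) auto
  then have "measure M Q / measure M A \<le> measure M (A \<inter> B) / measure M A"
    by (simp add: divide_right_mono)
  also have "\<dots> = measure (uniform_measure M A) B"
    using assms emeasure_eq_measure2[OF assms(1)] by (subst measure_uniform_measure) auto
  finally show ?thesis .
qed

theorem lemma3p2:
  assumes "is_square C"
  shows "measure (uniform_measure lebesgue C) {p \<in> C. area_ratio C p \<ge> 1/15} \<ge> 1/15"
proof -
  obtain L Q where L: "L > 0" and measure_C: "measure lebesgue C = L^2"
    and "Q \<subseteq> C" "Q \<in> lmeasurable" and measure_Q: "measure lebesgue Q = ((1 - 2 * (3/10)) * L)^2"
    and ball_Q: "\<And>p. p \<in> Q \<Longrightarrow> ball p (2 * (3/20 * L)) \<subseteq> C"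
    using is_square_inner_subsquare[OF assms, of "3/10"] by auto
  have C: "C \<in> lmeasurable" "bounded C"
    using compact_square[OF assms] by (simp_all add: lmeasurable_compact compact_imp_bounded)
  let ?S = "{p \<in> C. area_ratio C p \<ge> 1/15}"
  have "1/15 \<le> area_ratio C p" if "p \<in> Q" for p
  proof -
    have "1/15 \<le> pi * (3/20 * L)^2 / L^2"
      using pi_gt3 L by (simp add: power2_eq_square field_simps)
    also have "\<dots> \<le> area_ratio C p"
      unfolding measure_C[symmetric] using ball_Q[OF that] L C by (intro area_ratio_ge_ball) auto
    finally show ?thesis .
  qed
  with \<open>Q \<subseteq> C\<close> have "Q \<subseteq> C \<inter> ?S" by auto
  have "1/15 \<le> measure lebesgue Q / measure lebesgue C"
    unfolding measure_Q measure_C using L by (simp add: power2_eq_square field_simps)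
  also have "\<dots> \<le> measure (uniform_measure lebesgue C) ?S"
    using C L \<open>Q \<in> lmeasurable\<close> \<open>Q \<subseteq> C \<inter> ?S\<close> measure_C
    by (intro measure_uniform_measure_ge_subset sets_lebesgue_area_ratio_ge) auto
  finally show ?thesis .
qed

end
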